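(* Let $R$ be a fixed $R$-transform and, for $t \ge 0$, set $R(t,z) \coloneqq R(z e^{t})$. Let $m(t,z)$ denote the Stieltjes transform whose $R$-transform is $R(t,\cdot)$, and let $\omega(t,\cdot)$ denote its functional inverse (so that $m(t,\omega(t,z)) = z$), assumed differentiable in $(t,z)$. Then $m$ satisfies the partial differential equation \[ \frac{\partial m}{\partial t}(t,z) = -m(t,z) + \frac{1}{m(t,z)}\,\frac{\partial m}{\partial z}(t,z). \]
   Context: For a probability density $\rho$ on $\mathbb{R}$, its Stieltjes transform is $m(z) = \int_{\mathbb{R}} \frac{\rho(x)}{x-z}\,\mathrm{d}x$ for $z \in \mathbb{C}^{+} = \{\Im z > 0\}$. Letting $\omega$ denote the functional inverse of $m$ (i.e. $m(\omega(z)) = z$), the $R$-transform is $R(z) = \omega(-z) - z^{-1}$. Thus "the Stieltjes transform corresponding to the $R$-transform $R(t,\cdot)$" means the function $m(t,\cdot)$ with inverse $\omega(t,\cdot)$ satisfying $R(t,z) = \omega(t,-z) - z^{-1}$. *)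

theory Defs
  imports "HOL-Analysis.Analysis"
begin

definition prob_density :: "(real \<Rightarrow> real) \<Rightarrow> bool" where
  "prob_density \<rho> \<longleftrightarrow> (\<forall>x. 0 \<le> \<rho> x) \<and> has_bochner_integral lborel \<rho> 1"

text \<open>Stieltjes transform  m(z) = int rho(x)/(x - z) dx  (meant for Im z > 0).\<close>
definition stieltjes :: "(real \<Rightarrow> real) \<Rightarrow> complex \<Rightarrow> complex" where
  "stieltjes \<rho> z = integral\<^sup>L lborel (\<lambda>x. complex_of_real (\<rho> x) / (complex_of_real x - z))"

end

theory Submission
  imports Defs
begin

text \<open>
  Differentiating the identity \<open>m(s, \<omega>(s, v)) = v\<close> gives the partial derivatives of \<open>m\<close> at
  \<open>z = \<omega>(t, w)\<close> in terms of those of \<open>\<omega>\<close>: \<open>\<partial>\<^sub>z m = 1 / \<partial>\<^sub>v \<omega>\<close> and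
  \<open>\<partial>\<^sub>t m = - \<partial>\<^sub>t \<omega> / \<partial>\<^sub>v \<omega>\<close>. Since \<open>\<omega>(s, v) = R(- v e\<^sup>s) - 1 / v\<close> depends on \<open>s\<close> only
  through \<open>v e\<^sup>s\<close>, the \<open>R\<close>-part satisfies \<open>\<partial>\<^sub>s = v \<partial>\<^sub>v\<close>, whence
  \<open>\<partial>\<^sub>t \<omega> = w \<partial>\<^sub>v \<omega> - 1 / w\<close>. Substituting and using \<open>m(t, z) = w\<close> yields the equation.
\<close>

lemma has_derivative_inverse_identity:
  fixes m \<omega> :: "real \<Rightarrow> complex \<Rightarrow> complex"
  assumes m_deriv: "((\<lambda>p. m (fst p) (snd p)) has_derivative D) (at (t, \<omega> t w))"
    and \<omega>_deriv: "((\<lambda>p. \<omega> (fst p) (snd p)) has_derivative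
                   (\<lambda>p. of_real (fst p) * \<omega>\<^sub>t + snd p * \<omega>\<^sub>v)) (at (t, w))"
    and inverse: "\<forall>\<^sub>F p in nhds (t, w). m (fst p) (\<omega> (fst p) (snd p)) = snd p"
  shows "D (a, of_real a * \<omega>\<^sub>t + k * \<omega>\<^sub>v) = k"
proof -
  have "((\<lambda>p. (fst p, \<omega> (fst p) (snd p))) has_derivative
          (\<lambda>p. (fst p, of_real (fst p) * \<omega>\<^sub>t + snd p * \<omega>\<^sub>v))) (at (t, w))"
    by (intro has_derivative_Pair \<omega>_deriv has_derivative_fst has_derivative_ident)
  from diff_chain_at[OF this, of _ D, simplified, OF m_deriv]
  have "((\<lambda>p. m (fst p) (\<omega> (fst p) (snd p))) has_derivative
          (\<lambda>p. D (fst p, of_real (fst p) * \<omega>\<^sub>t + snd p * \<omega>\<^sub>v))) (at (t, w))"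
    by (simp add: o_def)
  moreover have "((\<lambda>p. m (fst p) (\<omega> (fst p) (snd p))) has_derivative snd) (at (t, w))"
  proof (rule has_derivative_transform_eventually[OF has_derivative_snd[OF has_derivative_ident]])
    have "\<forall>\<^sub>F p in at (t, w). m (fst p) (\<omega> (fst p) (snd p)) = snd p"
      using inverse unfolding eventually_nhds_conv_at by blast
    then show "\<forall>\<^sub>F p in at (t, w). snd p = m (fst p) (\<omega> (fst p) (snd p))"
      by (rule eventually_mono) (rule sym)
    show "snd (t, w) = m (fst (t, w)) (\<omega> (fst (t, w)) (snd (t, w)))"
      using eventually_nhds_x_imp_x[OF inverse] by simp
  qed simp
  ultimately have "(\<lambda>p. D (fst p, of_real (fst p) * \<omega>\<^sub>t + snd p * \<omega>\<^sub>v)) = snd"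
    by (rule has_derivative_unique)
  from fun_cong[OF this, of "(a, k)"] show ?thesis
    by simp
qed

lemma linear_inverse_identity_solve:
  fixes D :: "real \<times> complex \<Rightarrow> complex"
  assumes lin: "linear D"
    and identity: "\<And>a k. D (a, of_real a * \<omega>\<^sub>t + k * \<omega>\<^sub>v) = k"
  shows "\<omega>\<^sub>v \<noteq> 0" and "D (a, k) = (k - of_real a * \<omega>\<^sub>t) / \<omega>\<^sub>v"
proof -
  show \<omega>v: "\<omega>\<^sub>v \<noteq> 0"
  proof
    assume "\<omega>\<^sub>v = 0"
    then have "D 0 = 1"
      using identity[of 0 1] by (simp add: zero_prod_def)
    then show False
      using linear_0[OF lin] by simp
  qed
  have "k = of_real a * \<omega>\<^sub>t + (k - of_real a * \<omega>\<^sub>t) / \<omega>\<^sub>v * \<omega>\<^sub>v"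
    using \<omega>v by simp
  then show "D (a, k) = (k - of_real a * \<omega>\<^sub>t) / \<omega>\<^sub>v"
    using identity by metis
qed

lemma inverse_partial_derivatives:
  fixes m \<omega> :: "real \<Rightarrow> complex \<Rightarrow> complex"
  assumes m_diff: "(\<lambda>p. m (fst p) (snd p)) differentiable (at (t, \<omega> t w))"
    and \<omega>_deriv: "((\<lambda>p. \<omega> (fst p) (snd p)) has_derivative
                   (\<lambda>p. of_real (fst p) * \<omega>\<^sub>t + snd p * \<omega>\<^sub>v)) (at (t, w))"
    and inverse: "\<forall>\<^sub>F p in nhds (t, w). m (fst p) (\<omega> (fst p) (snd p)) = snd p"
  shows "\<omega>\<^sub>v \<noteq> 0"
    and "(m t has_field_derivative 1 / \<omega>\<^sub>v) (at (\<omega> t w))"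
    and "((\<lambda>s. m s (\<omega> t w)) has_vector_derivative - \<omega>\<^sub>t / \<omega>\<^sub>v) (at t)"
proof -
  obtain D where D: "((\<lambda>p. m (fst p) (snd p)) has_derivative D) (at (t, \<omega> t w))"
    using m_diff unfolding differentiable_def by blast
  note solve = linear_inverse_identity_solve[OF has_derivative_linear[OF D]
      has_derivative_inverse_identity[OF D \<omega>_deriv inverse]]
  show "\<omega>\<^sub>v \<noteq> 0"
    by (fact solve(1))
  have "((\<lambda>k. (t, k)) has_derivative (\<lambda>k. (0, k))) (at (\<omega> t w))"
    by (auto intro!: derivative_eq_intros)
  from diff_chain_at[OF this, of _ D, simplified, OF D]
  have "(m t has_derivative (\<lambda>k. D (0, k))) (at (\<omega> t w))"
    by (simp add: o_def)
  moreover have "(\<lambda>k. D (0, k)) = (*) (1 / \<omega>\<^sub>v)"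
    by (simp add: solve(2) fun_eq_iff)
  ultimately show "(m t has_field_derivative 1 / \<omega>\<^sub>v) (at (\<omega> t w))"
    unfolding has_field_derivative_def by simp
  have "((\<lambda>s. (s, \<omega> t w)) has_derivative (\<lambda>a. (a, 0))) (at t)"
    by (auto intro!: derivative_eq_intros)
  from diff_chain_at[OF this, of _ D, simplified, OF D]
  have "((\<lambda>s. m s (\<omega> t w)) has_derivative (\<lambda>a. D (a, 0))) (at t)"
    by (simp add: o_def)
  moreover have "(\<lambda>a. D (a, 0)) = (\<lambda>a. a *\<^sub>R (- \<omega>\<^sub>t / \<omega>\<^sub>v))"
    by (simp add: solve(2) fun_eq_iff scaleR_conv_of_real)
  ultimately show "((\<lambda>s. m s (\<omega> t w)) has_vector_derivative - \<omega>\<^sub>t / \<omega>\<^sub>v) (at t)"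
    unfolding has_vector_derivative_def by simp
qed

lemma has_derivative_R_transform_inverse:
  fixes \<omega> :: "real \<Rightarrow> complex \<Rightarrow> complex" and R :: "complex \<Rightarrow> complex"
  assumes R_diff: "R field_differentiable (at (- (w * of_real (exp t))))"
    and S: "open S" "(t, w) \<in> S"
    and nonzero: "\<And>s v. (s, v) \<in> S \<Longrightarrow> v \<noteq> 0"
    and R_transform: "\<And>s v. (s, v) \<in> S \<Longrightarrow> R (- v * of_real (exp s)) = \<omega> s v + 1 / v"
  defines "\<omega>\<^sub>v \<equiv> - deriv R (- (w * of_real (exp t))) * of_real (exp t) + 1 / w\<^sup>2"
  shows "((\<lambda>p. \<omega> (fst p) (snd p)) has_derivative
           (\<lambda>p. of_real (fst p) * (w * \<omega>\<^sub>v - 1 / w) + snd p * \<omega>\<^sub>v)) (at (t, w))"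
proof -
  have w0: "w \<noteq> 0"
    using nonzero S(2) .
  define R' where "R' = deriv R (- (w * of_real (exp t)))"
  have "((\<lambda>p. - snd p * of_real (exp (fst p))) has_derivative
      (\<lambda>p. - (snd p * of_real (exp t)) - w * (of_real (fst p) * of_real (exp t)))) (at (t, w))"
    by (auto intro!: derivative_eq_intros simp: algebra_simps)
  moreover have "(R has_derivative (*) R') (at (- snd (t, w) * of_real (exp (fst (t, w)))))"
    using R_diff unfolding R'_def
    by (simp add: DERIV_deriv_iff_field_differentiable[symmetric] has_field_derivative_def)
  ultimately have "((\<lambda>p. R (- snd p * of_real (exp (fst p)))) has_derivative
      (\<lambda>p. R' * (- (snd p * of_real (exp t)) - w * (of_real (fst p) * of_real (exp t))))) (at (t, w))"
    by (auto dest: diff_chain_at simp: o_def)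
  moreover have "((\<lambda>p. 1 / snd p) has_derivative (\<lambda>p. - (snd p / w\<^sup>2))) (at (t, w))"
    using w0 by (auto intro!: derivative_eq_intros simp: power2_eq_square field_simps)
  ultimately have "((\<lambda>p. R (- snd p * of_real (exp (fst p))) - 1 / snd p) has_derivative
      (\<lambda>p. R' * (- (snd p * of_real (exp t)) - w * (of_real (fst p) * of_real (exp t)))
            + snd p / w\<^sup>2)) (at (t, w))"
    by (auto dest: has_derivative_diff)
  also have "(\<lambda>p. R' * (- (snd p * of_real (exp t)) - w * (of_real (fst p) * of_real (exp t)))
            + snd p / w\<^sup>2) = (\<lambda>p. of_real (fst p) * (w * \<omega>\<^sub>v - 1 / w) + snd p * \<omega>\<^sub>v)"
    unfolding \<omega>\<^sub>v_def R'_def[symmetric] using w0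
    by (simp add: fun_eq_iff algebra_simps power2_eq_square)
  finally show ?thesis
  proof (rule has_derivative_transform_within_open[OF _ S])
    fix p assume "p \<in> S"
    with nonzero R_transform show "R (- snd p * of_real (exp (fst p))) - 1 / snd p = \<omega> (fst p) (snd p)"
      by (cases p) auto
  qed
qed

theorem proposition1:
  fixes R :: "complex \<Rightarrow> complex"
    and \<rho> :: "real \<Rightarrow> real \<Rightarrow> real"
    and m \<omega> :: "real \<Rightarrow> complex \<Rightarrow> complex"
    and W :: "(real \<times> complex) set"
    and t :: real and w :: complex
  assumes W_sub: "W \<subseteq> {(s, v). 0 \<le> s \<and> v \<noteq> 0}"
    and R_analytic: "R analytic_on {- (v * exp s) | s v. (s, v) \<in> W}"
    and density: "\<forall>s\<ge>0. prob_density (\<rho> s)"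
    and m_stieltjes: "\<forall>s\<ge>0. \<forall>z. 0 < Im z \<longrightarrow> m s z = stieltjes (\<rho> s) z"
    and inverse: "\<forall>(s, v)\<in>W. 0 < Im (\<omega> s v) \<and> m s (\<omega> s v) = v"
    and R_transform: "\<forall>(s, v)\<in>W. R ((- v) * exp s) = \<omega> s v + 1 / v"
    and \<omega>_diff: "\<forall>(s, v)\<in>W. (\<lambda>p. \<omega> (fst p) (snd p)) differentiable (at (s, v))"
    and m_diff: "\<forall>(s, v)\<in>W. (\<lambda>p. m (fst p) (snd p)) differentiable (at (s, \<omega> s v))"
    and pt: "(t, w) \<in> interior W"
  shows "vector_derivative (\<lambda>s. m s (\<omega> t w)) (at t)
           = - m t (\<omega> t w) + deriv (m t) (\<omega> t w) / m t (\<omega> t w)"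
proof -
  have tw: "(t, w) \<in> W"
    using pt interior_subset by blast
  have in_W: "(s, v) \<in> W" if "(s, v) \<in> interior W" for s v
    using that interior_subset by blast
  define \<omega>\<^sub>v where "\<omega>\<^sub>v = - deriv R (- (w * of_real (exp t))) * of_real (exp t) + 1 / w\<^sup>2"
  have "R field_differentiable (at (- (w * of_real (exp t))))"
    unfolding exp_of_real[symmetric] using R_analytic tw analytic_on_imp_differentiable_at by blast
  from this open_interior pt
  have "((\<lambda>p. \<omega> (fst p) (snd p)) has_derivative
      (\<lambda>p. of_real (fst p) * (w * \<omega>\<^sub>v - 1 / w) + snd p * \<omega>\<^sub>v)) (at (t, w))"
    unfolding \<omega>\<^sub>v_def
    by (rule has_derivative_R_transform_inverse) (use W_sub R_transform in_W in auto)
  moreover have "\<forall>\<^sub>F p in nhds (t, w). m (fst p) (\<omega> (fst p) (snd p)) = snd p"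
    using eventually_nhds_in_open[OF open_interior pt]
    by (rule eventually_mono) (use inverse interior_subset in \<open>auto simp: case_prod_beta\<close>)
  moreover have "(\<lambda>p. m (fst p) (snd p)) differentiable (at (t, \<omega> t w))"
    using m_diff tw by blast
  ultimately have \<omega>\<^sub>v_nonzero: "\<omega>\<^sub>v \<noteq> 0"
    and m_z: "(m t has_field_derivative 1 / \<omega>\<^sub>v) (at (\<omega> t w))"
    and m_t: "((\<lambda>s. m s (\<omega> t w)) has_vector_derivative - (w * \<omega>\<^sub>v - 1 / w) / \<omega>\<^sub>v) (at t)"
    using inverse_partial_derivatives by blast+
  have "vector_derivative (\<lambda>s. m s (\<omega> t w)) (at t) = - (w * \<omega>\<^sub>v - 1 / w) / \<omega>\<^sub>v"
    using m_t by (rule vector_derivative_at)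
  also have "\<dots> = - w + (1 / \<omega>\<^sub>v) / w"
    using \<omega>\<^sub>v_nonzero tw W_sub by (auto simp: field_simps)
  also have "1 / \<omega>\<^sub>v = deriv (m t) (\<omega> t w)"
    using m_z by (rule DERIV_imp_deriv[symmetric])
  finally show ?thesis
    using inverse tw by auto
qed

end
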